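(* Let $\beta\in(1,3/2]$, let $\vec z\in S_\beta$ and let $\vec z=\sum_{i=1}^\infty a_i\beta^{-i}$ with $a_i\in\{\vec q_0,\vec q_1,\vec q_2\}$ be any representation of $\vec z$ in base $\beta$. Then there exist $\omega\in\Omega$ and $\upsilon\in\Upsilon$ such that $a_i=d_i(\omega,\upsilon,\vec z)$ for all $i\ge1$.
   Context: $\vec q_0=(0,0)$, $\vec q_1=(1,0)$, $\vec q_2=(0,1)$; $S_\beta$ is the attractor of the IFS $f_{\vec q_i}(\vec z)=(\vec z+\vec q_i)/\beta$ (for $1<\beta\le3/2$ the closed triangle with vertices $(0,0)$, $(\frac1{\beta-1},0)$, $(0,\frac1{\beta-1})$). Subsets of $S_\beta$: $E_0=[0,\frac1\beta)\times[0,\frac1\beta)$; $E_1=\{0\le y<\frac1\beta,\ \frac{1}{\beta(\beta-1)}<x+y\le\frac{1}{\beta-1}\}$; $E_2=\{0\le x<\frac1\beta,\ \frac{1}{\beta(\beta-1)}<x+y\le\frac{1}{\beta-1}\}$; $C_{01}=\{x\ge\frac1\beta,\ 0\le y<\frac1\beta,\ x+y\le\frac{1}{\beta(\beta-1)}\}$; $C_{12}=\{x\ge\frac1\beta,\ y\ge\frac1\beta,\ \frac{1}{\beta(\beta-1)}<x+y\le\frac{1}{\beta-1}\}$; $C_{02}=\{0\le x<\frac1\beta,\ y\ge\frac1\beta,\ x+y\le\frac{1}{\beta(\beta-1)}\}$; $C_{012}=\{x\ge\frac1\beta,\ y\ge\frac1\beta,\ x+y\le\frac{1}{\beta(\beta-1)}\}$.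 $\Omega=\{0,1\}^{\mathbb N}$, $\Upsilon=\{0,1,2\}^{\mathbb N}$ with left shifts $\sigma,\sigma'$. $K_\beta:\Omega\times\Upsilon\times S_\beta\to\Omega\times\Upsilon\times S_\beta$: $K_\beta(\omega,\upsilon,\vec z)=(\omega,\upsilon,\beta\vec z-\vec q_i)$ if $\vec z\in E_i$; $(\sigma\omega,\upsilon,\beta\vec z-\vec q_i)$ if $\omega_1=0$, $\vec z\in C_{ij}$ ($ij\in\{01,12,02\}$); $(\sigma\omega,\upsilon,\beta\vec z-\vec q_j)$ if $\omega_1=1$, $\vec z\in C_{ij}$; $(\omega,\sigma'\upsilon,\beta\vec z-\vec q_i)$ if $\vec z\in C_{012}$ and $\upsilon_1=i$. The digit $d_1(\omega,\upsilon,\vec z)$ is the vector subtracted in this definition, and $d_n=d_1\circ K_\beta^{n-1}$. *)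

theory Defs
  imports "HOL-Analysis.Analysis"
begin

definition qv :: "nat \<Rightarrow> real \<times> real" where
  "qv i = (if i = 1 then 1 else 0, if i = 2 then 1 else 0)"

text \<open>S_beta for 1 < beta <= 3/2: the closed triangle.\<close>
definition S_beta :: "real \<Rightarrow> (real \<times> real) set" where
  "S_beta b = {(x, y). 0 \<le> x \<and> 0 \<le> y \<and> x + y \<le> 1 / (b - 1)}"

definition inE0 :: "real \<Rightarrow> real \<times> real \<Rightarrow> bool" where
  "inE0 b z = (case z of (x, y) \<Rightarrow> 0 \<le> x \<and> x < 1/b \<and> 0 \<le> y \<and> y < 1/b)"
definition inE1 :: "real \<Rightarrow> real \<times> real \<Rightarrow> bool" where
  "inE1 b z = (case z of (x, y) \<Rightarrow> 0 \<le> y \<and> y < 1/b \<and>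
      1/(b*(b-1)) < x + y \<and> x + y \<le> 1/(b-1))"
definition inE2 :: "real \<Rightarrow> real \<times> real \<Rightarrow> bool" where
  "inE2 b z = (case z of (x, y) \<Rightarrow> 0 \<le> x \<and> x < 1/b \<and>
      1/(b*(b-1)) < x + y \<and> x + y \<le> 1/(b-1))"
definition inC01 :: "real \<Rightarrow> real \<times> real \<Rightarrow> bool" where
  "inC01 b z = (case z of (x, y) \<Rightarrow> x \<ge> 1/b \<and> 0 \<le> y \<and> y < 1/b \<and> x + y \<le> 1/(b*(b-1)))"
definition inC12 :: "real \<Rightarrow> real \<times> real \<Rightarrow> bool" where
  "inC12 b z = (case z of (x, y) \<Rightarrow> x \<ge> 1/b \<and> y \<ge> 1/b \<and>
      1/(b*(b-1)) < x + y \<and> x + y \<le> 1/(b-1))"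
definition inC02 :: "real \<Rightarrow> real \<times> real \<Rightarrow> bool" where
  "inC02 b z = (case z of (x, y) \<Rightarrow> 0 \<le> x \<and> x < 1/b \<and> y \<ge> 1/b \<and> x + y \<le> 1/(b*(b-1)))"
definition inC012 :: "real \<Rightarrow> real \<times> real \<Rightarrow> bool" where
  "inC012 b z = (case z of (x, y) \<Rightarrow> x \<ge> 1/b \<and> y \<ge> 1/b \<and> x + y \<le> 1/(b*(b-1)))"

text \<open>Sequences: omega :: nat => nat with values in {0,1} (Omega), upsilon :: nat => nat
  with values in {0,1,2} (Upsilon); index 0 holds the first symbol omega_1.\<close>
definition shift :: "(nat \<Rightarrow> nat) \<Rightarrow> nat \<Rightarrow> nat" where
  "shift w = (\<lambda>n. w (Suc n))"

type_synonym state = "(nat \<Rightarrow> nat) \<times> (nat \<Rightarrow> nat) \<times> (real \<times> real)"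

text \<open>Index of the digit vector subtracted by K_beta (so d_1 = qv of it).
  Points outside all regions (outside S_beta) get an arbitrary value.\<close>
definition digit_idx :: "real \<Rightarrow> state \<Rightarrow> nat" where
  "digit_idx b s = (case s of (w, u, z) \<Rightarrow>
     if inE0 b z then 0
     else if inE1 b z then 1
     else if inE2 b z then 2
     else if inC01 b z then (if w 0 = 0 then 0 else 1)
     else if inC12 b z then (if w 0 = 0 then 1 else 2)
     else if inC02 b z then (if w 0 = 0 then 0 else 2)
     else if inC012 b z then u 0
     else 0)"

definition K_beta :: "real \<Rightarrow> state \<Rightarrow> state" where
  "K_beta b s = (case s of (w, u, z) \<Rightarrow>
     let z' = b *\<^sub>R z - qv (digit_idx b s) in
     if inE0 b z \<or> inE1 b z \<or> inE2 b z then (w, u, z')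
     else if inC01 b z \<or> inC12 b z \<or> inC02 b z then (shift w, u, z')
     else if inC012 b z then (w, shift u, z')
     else (w, u, z'))"

definition d1 :: "real \<Rightarrow> state \<Rightarrow> real \<times> real" where
  "d1 b s = qv (digit_idx b s)"

definition dn :: "real \<Rightarrow> nat \<Rightarrow> state \<Rightarrow> real \<times> real" where
  "dn b n s = d1 b ((K_beta b ^^ (n - 1)) s)"

end

theory Submission
  imports Defs
begin

text \<open>Let z_n = \<Sum>_(i\<ge>1) a_(n+i) \<beta>^(-i) be the tails of the expansion. Then
  z_(n+1) = \<beta> z_n - a_(n+1) and every z_n lies in S_\<beta>, so a_(n+1) is admissible at z_n, i.e.
  \<beta> z_n - a_(n+1) \<in> S_\<beta>. On E_i only one digit is admissible, and K_\<beta> subtracts it; on C_ij and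
  C_012 every admissible digit is picked by a suitable value of the next unread symbol of \<omega>
  resp. \<upsilon>. Since these symbols are read one at a time along the orbit, \<omega> and \<upsilon> are obtained
  by writing down the required symbols in the order in which they are read.\<close>

fun occurrences :: "(nat \<Rightarrow> bool) \<Rightarrow> nat \<Rightarrow> nat" where
  "occurrences P 0 = 0"
| "occurrences P (Suc n) = occurrences P n + (if P n then 1 else 0)"

lemma occurrences_mono: "m \<le> n \<Longrightarrow> occurrences P m \<le> occurrences P n"
  by (induction n) (auto simp: le_Suc_eq)

lemma occurrences_strict_mono:
  assumes "P m" "m < n"
  shows "occurrences P m < occurrences P n"
proof -
  have "occurrences P (Suc m) \<le> occurrences P n"
    using assms(2) by (intro occurrences_mono) simp
  then show ?thesis using assms(1) by simp
qed

lemma inj_on_occurrences: "inj_on (occurrences P) {n. P n}"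
  by (rule inj_onI) (metis mem_Collect_eq linorder_neqE_nat occurrences_strict_mono less_irrefl)

lemma exists_seq_at_occurrences:
  assumes "\<And>n. P n \<Longrightarrow> f n \<in> A" and "A \<noteq> {}"
  shows "\<exists>s. (\<forall>k. s k \<in> A) \<and> (\<forall>n. P n \<longrightarrow> s (occurrences P n) = f n)"
proof -
  obtain x where "x \<in> A" using assms(2) by blast
  let ?N = "{n. P n}"
  define s where "s k = (if k \<in> occurrences P ` ?N then f (inv_into ?N (occurrences P) k) else x)"
    for k
  have "s k \<in> A" for k
    using assms(1) inv_into_into[of k "occurrences P" ?N] \<open>x \<in> A\<close> by (auto simp: s_def)
  moreover have "s (occurrences P n) = f n" if "P n" for n
    using that inj_on_occurrences by (simp add: s_def)
  ultimately show ?thesis by blast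
qed

lemma sums_shift_digits:
  fixes a :: "nat \<Rightarrow> 'a::real_normed_vector" and b :: real
  assumes "b \<noteq> 0" and "(\<lambda>i. (1/b) ^ Suc i *\<^sub>R a i) sums z"
  shows "(\<lambda>i. (1/b) ^ Suc i *\<^sub>R a (Suc i)) sums (b *\<^sub>R z - a 0)"
proof -
  have "(\<lambda>i. (1/b) ^ Suc (Suc i) *\<^sub>R a (Suc i)) sums (z - (1/b) *\<^sub>R a 0)"
    using assms(2) sums_Suc_iff[where f = "\<lambda>i. (1/b) ^ Suc i *\<^sub>R a i"] by simp
  from sums_scaleR_right[OF this, of b] show ?thesis
    using assms(1) by (simp add: scaleR_diff_right)
qed

lemma geometric_sums_Suc:
  fixes b :: real
  assumes "1 < b"
  shows "(\<lambda>i. (1/b) ^ Suc i) sums (1/(b-1))"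
proof -
  have "(\<lambda>i. (1/b) * (1/b) ^ i) sums ((1/b) * (1 / (1 - 1/b)))"
    using assms by (intro sums_mult geometric_sums) simp
  moreover have "(1/b) * (1 / (1 - 1/b)) = 1/(b-1)"
    using assms by (simp add: field_simps)
  ultimately show ?thesis by simp
qed

lemma digit_series_in_S_beta:
  assumes "1 < b" and "\<And>i. a i \<in> {qv 0, qv 1, qv 2}"
    and "(\<lambda>i. (1/b) ^ Suc i *\<^sub>R a i) sums z"
  shows "z \<in> S_beta b"
proof -
  let ?g = "\<lambda>i. (1/b) ^ Suc i *\<^sub>R a i"
  have fst_sums: "(\<lambda>i. fst (?g i)) sums fst z"
    using bounded_linear.sums[OF bounded_linear_fst assms(3)] by simp
  have snd_sums: "(\<lambda>i. snd (?g i)) sums snd z"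
    using bounded_linear.sums[OF bounded_linear_snd assms(3)] by simp
  have coord_bounds: "0 \<le> fst (?g i)" "0 \<le> snd (?g i)" "fst (?g i) + snd (?g i) \<le> (1/b) ^ Suc i"
    for i using assms(1) assms(2)[of i] by (auto simp: qv_def)
  have "0 \<le> fst z" using sums_le[OF _ sums_zero fst_sums] coord_bounds by auto
  moreover have "0 \<le> snd z" using sums_le[OF _ sums_zero snd_sums] coord_bounds by auto
  moreover have "fst z + snd z \<le> 1/(b-1)"
    using sums_le[OF _ sums_add[OF fst_sums snd_sums] geometric_sums_Suc[OF assms(1)]]
      coord_bounds by auto
  ultimately show ?thesis by (cases z) (simp add: S_beta_def)
qed

lemma digit_expansion_tails:
  assumes "1 < b" and "\<And>i. a i \<in> {qv 0, qv 1, qv 2}"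
    and "(\<lambda>i. (1/b) ^ Suc i *\<^sub>R a i) sums z"
  shows "\<exists>p. p 0 = z \<and> (\<forall>n. p n \<in> S_beta b) \<and> (\<forall>n. p (Suc n) = b *\<^sub>R p n - a n)"
proof -
  define p where "p n = (\<Sum>i. (1/b) ^ Suc i *\<^sub>R a (n + i))" for n
  have p_sums: "(\<lambda>i. (1/b) ^ Suc i *\<^sub>R a (n + i)) sums p n" for n
  proof (induction n)
    case 0
    show ?case using assms(3) by (simp add: p_def sums_iff)
  next
    case (Suc n)
    from sums_shift_digits[OF _ this] assms(1) show ?case
      by (simp add: p_def sums_iff)
  qed
  have "p 0 = z" using p_sums[of 0] assms(3) by (simp add: sums_unique2)
  moreover have "p n \<in> S_beta b" for n
    using assms(1,2) p_sums by (rule digit_series_in_S_beta)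
  moreover have "p (Suc n) = b *\<^sub>R p n - a n" for n
    using sums_shift_digits[OF _ p_sums[of n]] p_sums[of "Suc n"] assms(1)
    by (simp add: sums_unique2)
  ultimately show ?thesis by blast
qed

lemma admissible_digit_bounds:
  assumes "1 < b" and "b *\<^sub>R z - qv c \<in> S_beta b"
  shows "c = 0 \<Longrightarrow> fst z + snd z \<le> 1/(b*(b-1))"
    and "c = 1 \<Longrightarrow> 1/b \<le> fst z"
    and "c = 2 \<Longrightarrow> 1/b \<le> snd z"
proof -
  obtain x y where xy: "b *\<^sub>R z - qv c = (x, y)" by (cases "b *\<^sub>R z - qv c")
  have z: "b * fst z = fst (qv c) + x" "b * snd z = snd (qv c) + y"
    using arg_cong[OF xy, of fst] arg_cong[OF xy, of snd] by simp_all
  have "0 \<le> x" "0 \<le> y" and sum_le: "x + y \<le> 1/(b-1)"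
    using assms(2) by (simp_all add: xy S_beta_def)
  with assms(1) z show "c = 1 \<Longrightarrow> 1/b \<le> fst z" "c = 2 \<Longrightarrow> 1/b \<le> snd z"
    by (auto simp: qv_def field_simps)
  assume "c = 0"
  with z have "b * (fst z + snd z) = x + y" by (simp add: qv_def algebra_simps)
  with assms(1) have "fst z + snd z = (x + y) / b" by (simp add: field_simps)
  also have "\<dots> \<le> (1/(b-1)) / b" using divide_right_mono[OF sum_le, of b] assms(1) by simp
  finally show "fst z + snd z \<le> 1/(b*(b-1))" by (simp add: mult.commute)
qed

definition reads_omega :: "real \<Rightarrow> real \<times> real \<Rightarrow> bool" where
  "reads_omega b z \<longleftrightarrow> \<not> (inE0 b z \<or> inE1 b z \<or> inE2 b z) \<and> (inC01 b z \<or> inC12 b z \<or> inC02 b z)"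

definition reads_upsilon :: "real \<Rightarrow> real \<times> real \<Rightarrow> bool" where
  "reads_upsilon b z \<longleftrightarrow> \<not> (inE0 b z \<or> inE1 b z \<or> inE2 b z) \<and>
     \<not> (inC01 b z \<or> inC12 b z \<or> inC02 b z) \<and> inC012 b z"

definition omega_choice :: "real \<Rightarrow> real \<times> real \<Rightarrow> nat \<Rightarrow> nat" where
  "omega_choice b z c = (if inC12 b z then (if c = 1 then 0 else 1) else (if c = 0 then 0 else 1))"

lemma K_beta_eq:
  "K_beta b (w, u, z) =
     (if reads_omega b z then shift w else w, if reads_upsilon b z then shift u else u,
      b *\<^sub>R z - qv (digit_idx b (w, u, z)))"
  by (simp add: K_beta_def reads_omega_def reads_upsilon_def Let_def)

lemma digit_idx_admissible:
  assumes "1 < b" and "z \<in> S_beta b" and "c \<in> {0, 1, 2}" and "b *\<^sub>R z - qv c \<in> S_beta b"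
    and "reads_omega b z \<Longrightarrow> w 0 = omega_choice b z c"
    and "reads_upsilon b z \<Longrightarrow> u 0 = c"
  shows "digit_idx b (w, u, z) = c"
proof -
  obtain x y where z: "z = (x, y)" by (cases z)
  note bounds = admissible_digit_bounds[OF assms(1,4), unfolded z fst_conv snd_conv]
  have "inE0 b z \<Longrightarrow> c = 0" "inE1 b z \<Longrightarrow> c = 1" "inE2 b z \<Longrightarrow> c = 2"
    and "inC01 b z \<Longrightarrow> c \<noteq> 2" "inC12 b z \<Longrightarrow> c \<noteq> 0" "inC02 b z \<Longrightarrow> c \<noteq> 1"
    and "inC01 b z \<Longrightarrow> \<not> inC12 b z"
    using assms(3) bounds
    by (auto simp: z inE0_def inE1_def inE2_def inC01_def inC12_def inC02_def)
  moreover have "inE0 b z \<or> inE1 b z \<or> inE2 b z \<or> inC01 b z \<or> inC12 b z \<or> inC02 b z \<or> inC012 b z"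
    using assms(2) by (auto simp: z S_beta_def inE0_def inE1_def inE2_def inC01_def inC12_def
        inC02_def inC012_def)
  ultimately show ?thesis
    using assms(3,5,6)
    by (auto simp: z digit_idx_def reads_omega_def reads_upsilon_def omega_choice_def)
qed

lemma K_beta_realises_admissible_orbit:
  assumes "1 < b" and "\<And>n. p n \<in> S_beta b" and "\<And>n. c n \<in> {0, 1, 2}"
    and "\<And>n. p (Suc n) = b *\<^sub>R p n - qv (c n)"
  shows "\<exists>\<omega> \<upsilon>. (\<forall>n. \<omega> n \<in> {0, 1}) \<and> (\<forall>n. \<upsilon> n \<in> {0, 1, 2}) \<and>
           (\<forall>n. dn b (Suc n) (\<omega>, \<upsilon>, p 0) = qv (c n))"
proof -
  define PW where "PW n \<longleftrightarrow> reads_omega b (p n)" for n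
  define PU where "PU n \<longleftrightarrow> reads_upsilon b (p n)" for n
  have "\<exists>\<omega>. (\<forall>k. \<omega> k \<in> {0, 1}) \<and>
      (\<forall>n. PW n \<longrightarrow> \<omega> (occurrences PW n) = omega_choice b (p n) (c n))"
    by (rule exists_seq_at_occurrences) (simp_all add: omega_choice_def)
  then obtain \<omega> where \<omega>: "\<forall>k. \<omega> k \<in> {0, 1}"
      "\<forall>n. PW n \<longrightarrow> \<omega> (occurrences PW n) = omega_choice b (p n) (c n)"
    by blast
  have "\<exists>\<upsilon>. (\<forall>k. \<upsilon> k \<in> {0, 1, 2}) \<and> (\<forall>n. PU n \<longrightarrow> \<upsilon> (occurrences PU n) = c n)"
    using assms(3) by (intro exists_seq_at_occurrences) simp_all
  then obtain \<upsilon> where \<upsilon>: "\<forall>k. \<upsilon> k \<in> {0, 1, 2}" "\<forall>n. PU n \<longrightarrow> \<upsilon> (occurrences PU n) = c n"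
    by blast
  \<comment> \<open>after n steps, \<omega> and \<upsilon> have been read once at each earlier step in PW resp. PU\<close>
  define state where
    "state n = (\<lambda>k. \<omega> (k + occurrences PW n), \<lambda>k. \<upsilon> (k + occurrences PU n), p n)" for n
  have digit: "digit_idx b (state n) = c n" for n
    unfolding state_def using \<omega>(2) \<upsilon>(2) assms(3,4)
    by (intro digit_idx_admissible) (auto simp: PW_def PU_def assms(1,2) simp flip: assms(4))
  have orbit: "(K_beta b ^^ n) (\<omega>, \<upsilon>, p 0) = state n" for n
  proof (induction n)
    case 0
    show ?case by (simp add: state_def)
  next
    case (Suc n)
    have "K_beta b (state n) = state (Suc n)"
      using digit[of n] unfolding state_def
      by (auto simp: K_beta_eq assms(4) shift_def PW_def PU_def)
    with Suc show ?case by simp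
  qed
  have "dn b (Suc n) (\<omega>, \<upsilon>, p 0) = qv (c n)" for n
    using digit[of n] by (simp add: dn_def d1_def orbit)
  with \<omega>(1) \<upsilon>(1) show ?thesis by blast
qed

theorem theorem4p3:
  fixes \<beta> :: real and z :: "real \<times> real" and a :: "nat \<Rightarrow> real \<times> real"
  assumes "1 < \<beta>" and "\<beta> \<le> 3/2"
    and "z \<in> S_beta \<beta>"
    and "\<And>i. i \<ge> 1 \<Longrightarrow> a i \<in> {qv 0, qv 1, qv 2}"
    and "(\<lambda>i. (1/\<beta>) ^ Suc i *\<^sub>R a (Suc i)) sums z"
  shows "\<exists>\<omega> \<upsilon>. (\<forall>n. \<omega> n \<in> {0, 1}) \<and> (\<forall>n. \<upsilon> n \<in> {0, 1, 2}) \<and>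
           (\<forall>i\<ge>1. a i = dn \<beta> i (\<omega>, \<upsilon>, z))"
proof -
  define c where "c n = (if a (Suc n) = qv 1 then 1 else if a (Suc n) = qv 2 then 2 else 0 :: nat)"
    for n
  have c_range: "c n \<in> {0, 1, 2}" for n by (simp add: c_def)
  have a_eq: "a (Suc n) = qv (c n)" for n using assms(4)[of "Suc n"] by (auto simp: c_def)
  have expansion: "(\<lambda>i. (1/\<beta>) ^ Suc i *\<^sub>R qv (c i)) sums z" using assms(5) unfolding a_eq .
  have "qv (c i) \<in> {qv 0, qv 1, qv 2}" for i using c_range[of i] by auto
  from digit_expansion_tails[OF assms(1) this expansion]
  obtain p where "p 0 = z" and p_in_S_beta: "\<And>n. p n \<in> S_beta \<beta>"
    and p_step: "\<And>n. p (Suc n) = \<beta> *\<^sub>R p n - qv (c n)"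
    by blast
  then obtain \<omega> \<upsilon> where "\<forall>n. \<omega> n \<in> {0, 1}" "\<forall>n. \<upsilon> n \<in> {0, 1, 2}"
      and digits: "\<forall>n. dn \<beta> (Suc n) (\<omega>, \<upsilon>, z) = qv (c n)"
    using K_beta_realises_admissible_orbit[where p = p and c = c, OF assms(1) p_in_S_beta c_range p_step] by blast
  moreover have "a i = dn \<beta> i (\<omega>, \<upsilon>, z)" if "1 \<le> i" for i
    using that digits a_eq by (cases i) auto
  ultimately show ?thesis by blast
qed

end
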